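(* Let $g\ge1$. For every $f\in\mathrm{Sp}(g,\mathbb{R})$, $(s(f))^2=(-1)^{n(f)}$.
   Context: Let $V=\mathbb{R}^{2g}$ with standard basis $p_1,\dots,p_g,q_1,\dots,q_g$ and symplectic form $\omega$ with $\omega(p_i,p_j)=\omega(q_i,q_j)=0$, $\omega(p_i,q_j)=-\omega(q_i,p_j)=\delta_{ij}$. $\mathrm{Sp}(g,\mathbb{R})$ is the group of linear isometries of $(V,\omega)$. A lagrangian is a subspace equal to its own $\omega$-orthogonal; $\lambda_0=\mathrm{span}\{p_1,\dots,p_g\}$. Definition of $s$: for oriented lagrangians $\lambda_1,\lambda_2$ of a real symplectic space, let $\kappa=\lambda_1\cap\lambda_2$. If $\kappa=0$, $\epsilon(\lambda_1,\lambda_2)=\mathrm{sgn}\det(\omega(a_i,b_j))$ for positive bases $(a_i)$ of $\lambda_1$, $(b_j)$ of $\lambda_2$. If $\kappa\neq0$, orient $\kappa$ arbitrarily, orient $\lambda_i/\kappa$ so that a positive basis of $\kappa$ followed by lifts of a positive basis of $\lambda_i/\kappa$ is positive in $\lambda_i$, and set $\epsilon(\lambda_1,\lambda_2)=\epsilon(\lambda_1/\kappa,\lambda_2/\kappa)$ in $\kappa^\perp/\kappa$; if $\lambda_1=\lambda_2$, $\epsilon=\pm1$ according as orientations agree or not. Put $s(\lambda_1,\lambda_2)=i^{\dim\lambda_1-\dim\kappa}\epsilon(\lambda_1,\lambda_2)$, and $s(f)=s(\lambda_0,f(\lambda_0))$ with $\lambda_0$ arbitrarily oriented and $f(\lambda_0)$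 given the image orientation. Definition of $n$: for $f\in\mathrm{Sp}(g,\mathbb{R})$, $\star_f$ is the nonsingular bilinear form on $(f-1)V$ with $a\star_f b=\omega(x,b)$ where $(f-1)x=a$; $\mathrm{sgn}[\det(\star_f)]\in\{\pm1\}$ is the sign of the determinant of its Gram matrix (equal to $1$ for $f=\mathrm{Id}$); $\star_{f,\lambda_0}$ is its (symmetric) restriction to $\lambda_0\cap(f-1)V$. Then $n(f)=\mathrm{Signature}(\star_{f,\lambda_0})-\dim((f-1)V)-\mathrm{sgn}[\det(\star_f)]+1$. *)

theory Defs
  imports "HOL-Analysis.Analysis"
begin

text \<open>V = R^(2g) realised as (real^'g) x (real^'g): first component = p-coordinates,
  second component = q-coordinates. g = CARD('g) >= 1 automatically.\<close>

type_synonym 'g sympvec = "(real^'g) \<times> (real^'g)"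

definition omega :: "'g::finite sympvec \<Rightarrow> 'g sympvec \<Rightarrow> real" where
  "omega u v = fst u \<bullet> snd v - snd u \<bullet> fst v"

definition symplectic :: "('g::finite sympvec \<Rightarrow> 'g sympvec) \<Rightarrow> bool" where
  "symplectic f \<longleftrightarrow> linear f \<and> (\<forall>x y. omega (f x) (f y) = omega x y)"

definition lagrangian :: "'g::finite sympvec set \<Rightarrow> bool" where
  "lagrangian L \<longleftrightarrow> subspace L \<and> L = {x. \<forall>y\<in>L. omega x y = 0}"

definition lambda0 :: "'g::finite sympvec set" where
  "lambda0 = {x. snd x = 0}"

definition ldet :: "nat \<Rightarrow> (nat \<Rightarrow> nat \<Rightarrow> real) \<Rightarrow> real" where
  "ldet m M = (\<Sum>p | p permutes {..<m}. of_int (sign p) * (\<Prod>i<m. M i (p i)))"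

definition basis_list :: "'g::finite sympvec set \<Rightarrow> 'g sympvec list \<Rightarrow> bool" where
  "basis_list L bs \<longleftrightarrow> distinct bs \<and> independent (set bs) \<and> span (set bs) = L"

definition same_orient :: "'g::finite sympvec list \<Rightarrow> 'g sympvec list \<Rightarrow> bool" where
  "same_orient a b \<longleftrightarrow> length a = length b \<and>
     (\<exists>M. (\<forall>j<length b. b ! j = (\<Sum>i<length a. M i j *\<^sub>R a ! i)) \<and> ldet (length a) M > 0)"

text \<open>epsilon(lambda1, lambda2) for oriented lagrangians (L1 oriented by basis a, L2 by basis b).
  kappa = L1 \<inter> L2 oriented by basis c; lifts a', b' of positive bases of L1/kappa, L2/kappa
  are such that c@a', c@b' are positive bases; the induced form on kappa^perp/kappa is
  evaluated on these lifts.\<close>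
definition eps :: "'g::finite sympvec set \<Rightarrow> 'g sympvec list \<Rightarrow> 'g sympvec set \<Rightarrow> 'g sympvec list \<Rightarrow> real" where
  "eps L1 a L2 b =
    (if L1 = L2 then (if same_orient a b then 1 else -1)
     else (case (SOME (c, a', b'). basis_list (L1 \<inter> L2) c
                   \<and> basis_list L1 (c @ a') \<and> same_orient (c @ a') a
                   \<and> basis_list L2 (c @ b') \<and> same_orient (c @ b') b) of
           (c, a', b') \<Rightarrow> sgn (ldet (length a') (\<lambda>i j. omega (a' ! i) (b' ! j)))))"

definition s_lag :: "'g::finite sympvec set \<Rightarrow> 'g sympvec list \<Rightarrow> 'g sympvec set \<Rightarrow> 'g sympvec list \<Rightarrow> complex" where
  "s_lag L1 a L2 b = \<i> ^ (dim L1 - dim (L1 \<inter> L2)) * complex_of_real (eps L1 a L2 b)"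

definition s_of :: "('g::finite sympvec \<Rightarrow> 'g sympvec) \<Rightarrow> complex" where
  "s_of f = (let a = (SOME a. basis_list (lambda0 :: 'g sympvec set) a)
             in s_lag lambda0 a (f ` lambda0) (map f a))"

definition imgW :: "('g::finite sympvec \<Rightarrow> 'g sympvec) \<Rightarrow> 'g sympvec set" where
  "imgW f = range (\<lambda>x. f x - x)"

definition star :: "('g::finite sympvec \<Rightarrow> 'g sympvec) \<Rightarrow> 'g sympvec \<Rightarrow> 'g sympvec \<Rightarrow> real" where
  "star f a b = omega (SOME x. f x - x = a) b"

definition sgn_det_star :: "('g::finite sympvec \<Rightarrow> 'g sympvec) \<Rightarrow> int" where
  "sgn_det_star f = (let w = (SOME w. basis_list (imgW f) w);
                         d = ldet (length w) (\<lambda>i j. star f (w ! i) (w ! j))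
                     in if d > 0 then 1 else if d < 0 then -1 else 0)"

definition signature :: "('g::finite sympvec \<Rightarrow> 'g sympvec \<Rightarrow> real) \<Rightarrow> 'g sympvec set \<Rightarrow> int" where
  "signature B U =
     int (Max {dim S | S. subspace S \<and> S \<subseteq> U \<and> (\<forall>x\<in>S. x \<noteq> 0 \<longrightarrow> B x x > 0)})
   - int (Max {dim S | S. subspace S \<and> S \<subseteq> U \<and> (\<forall>x\<in>S. x \<noteq> 0 \<longrightarrow> B x x < 0)})"

definition n_of :: "('g::finite sympvec \<Rightarrow> 'g sympvec) \<Rightarrow> int" where
  "n_of f = signature (star f) (lambda0 \<inter> imgW f) - int (dim (imgW f)) - sgn_det_star f + 1"

end

theory Submission
  imports Defs "Jordan_Normal_Form.Determinant"
begin

text \<open>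
  Let \<open>k = dim (\<lambda>\<^sub>0 \<inter> f \<lambda>\<^sub>0)\<close>. Since \<open>\<lambda>\<^sub>0\<close> and \<open>f \<lambda>\<^sub>0\<close> are lagrangian, \<open>\<omega>\<close> pairs
  complements of \<open>\<kappa> = \<lambda>\<^sub>0 \<inter> f \<lambda>\<^sub>0\<close> in them nondegenerately, so \<open>\<epsilon> = \<plusminus>1\<close> and
  \<open>s(f)\<^sup>2 = (-1)\<^bsup>g - k\<^esup>\<close>.

  Let \<open>N\<close> be the fixed space of \<open>f\<close>; then \<open>W = (f - 1)V\<close> is the \<open>\<omega>\<close>-complement of \<open>N\<close>.
  Writing \<open>a \<star>\<^sub>f b = \<omega>(h a, b)\<close> for a linear right inverse \<open>h\<close> of \<open>f - 1\<close> on \<open>W\<close>, the form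
  \<open>\<star>\<^sub>f\<close> is nondegenerate on \<open>W\<close>, so \<open>sgn det \<star>\<^sub>f = \<plusminus>1\<close>, and it is symmetric on
  \<open>U = \<lambda>\<^sub>0 \<inter> W\<close> with radical \<open>\<lambda>\<^sub>0 \<inter> (f - 1)\<lambda>\<^sub>0\<close>. By Sylvester's law of inertia the
  signature of \<open>\<star>\<^sub>f\<close> on \<open>U\<close> is congruent to \<open>dim U - dim (\<lambda>\<^sub>0 \<inter> (f - 1)\<lambda>\<^sub>0)\<close> mod 2, and the
  dimension counts \<open>dim W = 2g - dim N\<close>, \<open>dim U = g + dim (\<lambda>\<^sub>0 \<inter> N) - dim N\<close> and
  \<open>dim (\<lambda>\<^sub>0 \<inter> (f - 1)\<lambda>\<^sub>0) = k - dim (\<lambda>\<^sub>0 \<inter> N)\<close> give \<open>n(f) \<equiv> g - k\<close> mod 2.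
\<close>

section \<open>Sylvester's law of inertia\<close>

lemma dim_image_add_dim_kernel:
  fixes f :: "'a::euclidean_space \<Rightarrow> 'b::euclidean_space"
  assumes lf: "linear f" and S: "subspace S"
  shows "dim (f ` S) + dim (S \<inter> {x. f x = 0}) = dim S"
proof -
  define K where "K = S \<inter> {x. f x = 0}"
  have sK: "subspace K" unfolding K_def
    using S lf by (auto simp: subspace_def linear_0 linear_add linear_scale)
  have KS: "K \<subseteq> S" unfolding K_def by auto
  define T where "T = {y \<in> S. \<forall>x \<in> K. Linear_Algebra.orthogonal x y}"
  have dT: "dim T + dim K = dim S" unfolding T_def
    using dim_subspace_orthogonal_to_vectors[OF sK S KS] .
  have "T = S \<inter> orthogonal_comp K" unfolding T_def orthogonal_comp_def by auto
  hence sT: "subspace T" using subspace_inter[OF S subspace_orthogonal_comp] by simp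
  have injT: "inj_on f (span T)"
  proof (rule inj_onI)
    fix x y assume xy: "x \<in> span T" "y \<in> span T" "f x = f y"
    have "x \<in> T" "y \<in> T" using xy(1,2) span_eq_iff[THEN iffD2, OF sT] by auto
    hence "x - y \<in> T" using sT by (simp add: subspace_diff)
    moreover have "f (x - y) = 0" using xy lf by (simp add: linear_diff)
    ultimately have "x - y \<in> K" "x - y \<in> T" unfolding K_def T_def by auto
    hence "Linear_Algebra.orthogonal (x - y) (x - y)" unfolding T_def by auto
    thus "x = y" by (simp add: Linear_Algebra.orthogonal_self)
  qed
  have fTS: "f ` T = f ` S"
  proof
    show "f ` T \<subseteq> f ` S" unfolding T_def by auto
    show "f ` S \<subseteq> f ` T"
    proof
      fix v assume "v \<in> f ` S"
      then obtain s where s: "s \<in> S" "v = f s" by auto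
      obtain y z where yz: "y \<in> span K" "\<And>w. w \<in> span K \<Longrightarrow> Linear_Algebra.orthogonal z w" "s = y + z"
        using orthogonal_subspace_decomp_exists[of K s] by blast
      have yK: "y \<in> K" using yz(1) span_eq_iff[THEN iffD2, OF sK] by auto
      have zS: "z = s - y" using yz(3) by simp
      have "z \<in> S" using zS s(1) yK KS S by (auto intro: subspace_diff)
      moreover have "\<forall>x\<in>K. Linear_Algebra.orthogonal x z" using yz(2) span_superset Linear_Algebra.orthogonal_commute by blast
      ultimately have "z \<in> T" unfolding T_def by auto
      moreover have "f z = f s" using zS yK lf unfolding K_def by (simp add: linear_diff)
      ultimately show "v \<in> f ` T" using s by (metis image_eqI)
    qed
  qed
  have "dim (f ` T) = dim T" using dim_image_eq[OF lf injT] .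
  hence "dim (f ` S) = dim T" by (simp only: fTS)
  thus ?thesis using dT unfolding K_def by linarith
qed

definition pos_index :: "('a::euclidean_space \<Rightarrow> 'a \<Rightarrow> real) \<Rightarrow> 'a set \<Rightarrow> nat" where
  "pos_index B U = Max {dim S | S. subspace S \<and> S \<subseteq> U \<and> (\<forall>x\<in>S. x \<noteq> 0 \<longrightarrow> B x x > 0)}"

definition form_radical :: "('a::euclidean_space \<Rightarrow> 'a \<Rightarrow> real) \<Rightarrow> 'a set \<Rightarrow> 'a set" where
  "form_radical B U = {x \<in> U. \<forall>y\<in>U. B x y = 0}"

lemma subspace_form_orth:
  fixes B :: "'a::euclidean_space \<Rightarrow> 'a \<Rightarrow> real"
  assumes "subspace U" "bilinear B"
  shows "subspace {x \<in> U. \<forall>y\<in>P. B x y = 0}"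
  using assms unfolding subspace_def by (auto simp: bilinear_ladd bilinear_lmul bilinear_lzero)

lemma subspace_form_radical: "subspace U \<Longrightarrow> bilinear B \<Longrightarrow> subspace (form_radical B U)"
  unfolding form_radical_def by (rule subspace_form_orth)

lemma finite_definite_dims:
  fixes B :: "'a::euclidean_space \<Rightarrow> 'a \<Rightarrow> real"
  shows "finite {dim S | S. subspace S \<and> S \<subseteq> U \<and> (\<forall>x\<in>S. x \<noteq> 0 \<longrightarrow> B x x > 0)}"
  by (rule finite_subset[of _ "{..dim U}"]) (auto intro: dim_subset)

lemma dim_le_pos_index:
  fixes B :: "'a::euclidean_space \<Rightarrow> 'a \<Rightarrow> real"
  assumes "subspace S" "S \<subseteq> U" "\<And>x. x \<in> S \<Longrightarrow> x \<noteq> 0 \<Longrightarrow> B x x > 0"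
  shows "dim S \<le> pos_index B U"
  unfolding pos_index_def using assms by (intro Max_ge[OF finite_definite_dims]) auto

lemma pos_index_cong:
  fixes B B' :: "'a::euclidean_space \<Rightarrow> 'a \<Rightarrow> real"
  assumes "\<And>x. x \<in> U \<Longrightarrow> B x x = B' x x"
  shows "pos_index B U = pos_index B' U"
proof -
  have "(\<forall>x\<in>S. x \<noteq> 0 \<longrightarrow> 0 < B x x) = (\<forall>x\<in>S. x \<noteq> 0 \<longrightarrow> 0 < B' x x)" if "S \<subseteq> U" for S
  proof -
    have "\<forall>x\<in>S. B x x = B' x x" using that assms by blast
    thus ?thesis by simp
  qed
  thus ?thesis unfolding pos_index_def by (intro arg_cong[where f = Max] Collect_cong ex_cong1 conj_cong refl)
qed

lemma pos_index_obtain: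
  fixes B :: "'a::euclidean_space \<Rightarrow> 'a \<Rightarrow> real"
  assumes "subspace U"
  obtains P where "subspace P" "P \<subseteq> U" "\<And>x. x \<in> P \<Longrightarrow> x \<noteq> 0 \<Longrightarrow> B x x > 0"
    "dim P = pos_index B U"
proof -
  let ?D = "{dim S | S. subspace S \<and> S \<subseteq> U \<and> (\<forall>x\<in>S. x \<noteq> 0 \<longrightarrow> B x x > 0)}"
  have "dim {0::'a} \<in> ?D"
    using assms by (intro CollectI exI[of _ "{0::'a}"] conjI refl) (auto simp: subspace_0)
  hence "?D \<noteq> {}" by blast
  hence "pos_index B U \<in> ?D" unfolding pos_index_def by (rule Max_in[OF finite_definite_dims])
  then obtain P where "pos_index B U = dim P" "subspace P" "P \<subseteq> U"
    "\<forall>x\<in>P. x \<noteq> 0 \<longrightarrow> B x x > 0" by blast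
  thus ?thesis by (intro that[of P]) auto
qed

lemma pos_index_add_neg_index_le:
  fixes B :: "'a::euclidean_space \<Rightarrow> 'a \<Rightarrow> real"
  assumes U: "subspace U" and B: "bilinear B"
    and sym: "\<And>x y. x \<in> U \<Longrightarrow> y \<in> U \<Longrightarrow> B x y = B y x"
  shows "pos_index B U + pos_index (\<lambda>x y. - B x y) U + dim (form_radical B U) \<le> dim U"
proof -
  obtain P where P: "subspace P" "P \<subseteq> U" "\<And>x. x \<in> P \<Longrightarrow> x \<noteq> 0 \<Longrightarrow> B x x > 0"
    "dim P = pos_index B U" using pos_index_obtain[OF U, of B] by blast
  obtain Q where Q: "subspace Q" "Q \<subseteq> U" "\<And>x. x \<in> Q \<Longrightarrow> x \<noteq> 0 \<Longrightarrow> - B x x > 0"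
    "dim Q = pos_index (\<lambda>x y. - B x y) U" using pos_index_obtain[OF U, of "\<lambda>x y. - B x y"] by blast
  define R where "R = form_radical B U"
  have sR: "subspace R" and RU: "R \<subseteq> U"
    unfolding R_def using subspace_form_radical[OF U B] by (auto simp: form_radical_def)
  define QR where "QR = {x + y |x y. x \<in> Q \<and> y \<in> R}"
  have "Q \<inter> R = {0}"
  proof -
    have "x = 0" if "x \<in> Q" "x \<in> R" for x
      using that Q(3)[of x] unfolding R_def form_radical_def by fastforce
    thus ?thesis using Q(1) sR by (auto simp: subspace_0)
  qed
  hence dQR: "dim QR = dim Q + dim R" using dim_sums_Int[OF Q(1) sR] unfolding QR_def by simp
  have sQR: "subspace QR" unfolding QR_def using Q(1) sR by (rule subspace_sums)
  have "P \<inter> QR = {0}"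
  proof -
    have "x = 0" if "x \<in> P" "x \<in> QR" for x
    proof (rule ccontr)
      assume nz: "x \<noteq> 0"
      from that(2) obtain y z where yz: "y \<in> Q" "z \<in> R" "x = y + z" unfolding QR_def by auto
      have yU: "y \<in> U" using yz Q(2) by auto
      have zU: "z \<in> U" using yz RU by auto
      have "B y z = 0" "B z y = 0" "B z z = 0"
        using sym[OF yU zU] yz(2) yU zU unfolding R_def form_radical_def by auto
      hence "B x x = B y y" using yz(3) by (simp add: bilinear_ladd[OF B] bilinear_radd[OF B])
      moreover have "B y y \<le> 0" using Q(3)[of y] yz(1) by (cases "y = 0") (auto simp: bilinear_lzero[OF B])
      moreover have "B x x > 0" using P(3)[OF that(1) nz] .
      ultimately show False by simp
    qed
    thus ?thesis using P(1) sQR by (auto simp: subspace_0)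
  qed
  hence "dim {x + y |x y. x \<in> P \<and> y \<in> QR} = dim P + dim QR"
    using dim_sums_Int[OF P(1) sQR] by simp
  moreover have "QR \<subseteq> U" unfolding QR_def using Q(2) RU U by (auto intro!: subspace_add)
  hence "{x + y |x y. x \<in> P \<and> y \<in> QR} \<subseteq> U" using P(2) U by (auto intro!: subspace_add)
  hence "dim {x + y |x y. x \<in> P \<and> y \<in> QR} \<le> dim U" by (rule dim_subset)
  ultimately show ?thesis using dQR P(4) Q(4) R_def by simp
qed

lemma dim_le_add_dim_form_orth:
  fixes B :: "'a::euclidean_space \<Rightarrow> 'a \<Rightarrow> real"
  assumes U: "subspace U" and B: "bilinear B"
  shows "dim U \<le> dim P + dim {x \<in> U. \<forall>y\<in>P. B x y = 0}"
proof -
  obtain Bs where Bs: "Bs \<subseteq> P" "independent Bs" "P \<subseteq> span Bs" "card Bs = dim P"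
    using basis_exists by blast
  have fin: "finite Bs" using Bs(2) by (simp add: finiteI_independent)
  define phi where "phi x = (\<Sum>b\<in>Bs. B x b *\<^sub>R b)" for x
  have lphi: "linear phi" unfolding phi_def
    by (intro linearI) (simp_all add: bilinear_ladd[OF B] bilinear_lmul[OF B]
        scaleR_add_left sum.distrib scaleR_sum_right)
  have "U \<inter> {x. phi x = 0} \<subseteq> {x \<in> U. \<forall>y\<in>P. B x y = 0}"
  proof safe
    fix x y assume x: "x \<in> U" "phi x = 0" and y: "y \<in> P"
    have ind: "\<And>c. (\<Sum>v\<in>Bs. c v *\<^sub>R v) = 0 \<Longrightarrow> \<forall>v\<in>Bs. c v = 0"
      using Bs(2) by (simp add: independent_explicit)
    have "\<forall>b\<in>Bs. B x b = 0" using ind[of "\<lambda>b. B x b"] x(2) by (simp add: phi_def)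
    moreover have "linear (B x)" using B by (simp add: bilinear_def)
    ultimately show "B x y = 0" using linear_eq_0_on_span[of "B x" Bs y] y Bs(3) by blast
  qed
  moreover have "{x \<in> U. \<forall>y\<in>P. B x y = 0} \<subseteq> U \<inter> {x. phi x = 0}"
    using Bs(1) by (auto simp: phi_def intro!: sum.neutral)
  ultimately have "U \<inter> {x. phi x = 0} = {x \<in> U. \<forall>y\<in>P. B x y = 0}" by blast
  moreover have "dim (phi ` U) \<le> dim P"
  proof -
    have "phi x \<in> span Bs" for x unfolding phi_def by (rule span_sum) (simp add: span_scale span_base)
    hence "phi ` U \<subseteq> span Bs" by blast
    hence "dim (phi ` U) \<le> dim Bs" using dim_subset[of "phi ` U" "span Bs"] by simp
    thus ?thesis using dim_le_card'[OF fin] Bs(4) by linarith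
  qed
  ultimately show ?thesis using dim_image_add_dim_kernel[OF lphi U] by simp
qed

lemma form_orth_decomp:
  fixes B :: "'a::euclidean_space \<Rightarrow> 'a \<Rightarrow> real"
  assumes U: "subspace U" and B: "bilinear B"
    and P: "subspace P" "P \<subseteq> U" "\<And>x. x \<in> P \<Longrightarrow> x \<noteq> 0 \<Longrightarrow> B x x > 0"
  shows "{y + z |y z. y \<in> P \<and> z \<in> {x \<in> U. \<forall>y\<in>P. B x y = 0}} = U"
proof -
  define P' where "P' = {x \<in> U. \<forall>y\<in>P. B x y = 0}"
  have sP': "subspace P'" unfolding P'_def using U B by (rule subspace_form_orth)
  have "P \<inter> P' \<subseteq> {0}" using P(3) by (force simp: P'_def)
  hence "dim (P \<inter> P') = 0" by simp
  hence "dim {y + z |y z. y \<in> P \<and> z \<in> P'} = dim P + dim P'"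
    using dim_sums_Int[OF P(1) sP'] by linarith
  moreover have "{y + z |y z. y \<in> P \<and> z \<in> P'} \<subseteq> U"
    using P(2) U by (auto simp: P'_def intro!: subspace_add)
  moreover have "subspace {y + z |y z. y \<in> P \<and> z \<in> P'}" using P(1) sP' by (rule subspace_sums)
  ultimately show ?thesis
    using subspace_dim_equal[OF _ U] dim_le_add_dim_form_orth[OF U B, of P] unfolding P'_def by simp
qed

lemma semidefinite_isotropic_form_orth:
  fixes B :: "'a::euclidean_space \<Rightarrow> 'a \<Rightarrow> real"
  assumes S: "subspace S" and B: "bilinear B"
    and sym: "\<And>x y. x \<in> S \<Longrightarrow> y \<in> S \<Longrightarrow> B x y = B y x"
    and nonpos: "\<And>x. x \<in> S \<Longrightarrow> B x x \<le> 0"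
    and x: "x \<in> S" "B x x = 0" and y: "y \<in> S"
  shows "B x y = 0"
proof (rule ccontr)
  assume "B x y \<noteq> 0"
  define c d where "c = B x y" and "d = B y y"
  \<comment> \<open>The vector \<open>(1 - d) x + c y\<close> of \<open>S\<close> would have \<open>B\<close>-square \<open>c\<^sup>2 (2 - d) > 0\<close>.\<close>
  define z where "z = (1 - d) *\<^sub>R x + c *\<^sub>R y"
  have "z \<in> S" unfolding z_def using S x y by (simp add: subspace_add subspace_scale)
  have "B z z = (1 - d) * (1 - d) * B x x + (1 - d) * c * (B x y + B y x) + c * c * B y y"
    unfolding z_def
    by (simp only: bilinear_ladd[OF B] bilinear_radd[OF B] bilinear_lmul[OF B] bilinear_rmul[OF B])
      (simp add: algebra_simps)
  also have "\<dots> = c * c * (2 - d)"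
    using x(2) sym[OF y x(1)] by (simp add: c_def d_def algebra_simps)
  finally have Bz: "B z z = c * c * (2 - d)" .
  have "c * c > 0" unfolding c_def using \<open>B x y \<noteq> 0\<close> not_real_square_gt_zero by blast
  moreover have "d \<le> 0" unfolding d_def using nonpos[OF y] .
  ultimately have "c * c * (2 - d) > 0" using mult_pos_pos[of "c * c" "2 - d"] by simp
  thus False using nonpos[OF \<open>z \<in> S\<close>] Bz by linarith
qed

lemma dim_semidefinite_le:
  fixes B :: "'a::euclidean_space \<Rightarrow> 'a \<Rightarrow> real"
  assumes S: "subspace S" "S \<subseteq> U" and B: "bilinear B"
    and sym: "\<And>x y. x \<in> S \<Longrightarrow> y \<in> S \<Longrightarrow> B x y = B y x"
    and nonpos: "\<And>x. x \<in> S \<Longrightarrow> B x x \<le> 0"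
  shows "dim S \<le> pos_index (\<lambda>x y. - B x y) U + dim (form_radical B S)"
proof -
  define R where "R = form_radical B S"
  have R: "subspace R" "R \<subseteq> S" unfolding R_def form_radical_def
    using subspace_form_orth[OF S(1) B] by auto
  define C where "C = {y \<in> S. \<forall>x\<in>R. Linear_Algebra.orthogonal x y}"
  have "dim C + dim R = dim S" unfolding C_def by (rule dim_subspace_orthogonal_to_vectors[OF R(1) S(1) R(2)])
  moreover have "dim C \<le> pos_index (\<lambda>x y. - B x y) U"
  proof (rule dim_le_pos_index)
    show "subspace C" unfolding C_def using S(1)
      by (auto simp: subspace_def orthogonal_clauses)
    show "C \<subseteq> U" using S(2) by (auto simp: C_def)
    fix x assume x: "x \<in> C" "x \<noteq> 0"
    have "B x x \<noteq> 0"
    proof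
      assume "B x x = 0"
      hence "x \<in> R" using semidefinite_isotropic_form_orth[OF S(1) B sym nonpos] x(1)
        by (auto simp: R_def C_def form_radical_def)
      thus False using x by (auto simp: C_def Linear_Algebra.orthogonal_self)
    qed
    thus "- B x x > 0" using nonpos x(1) C_def by force
  qed
  ultimately show ?thesis unfolding R_def by linarith
qed

lemma max_pos_form_orth_nonpos:
  fixes B :: "'a::euclidean_space \<Rightarrow> 'a \<Rightarrow> real"
  assumes U: "subspace U" and B: "bilinear B"
    and sym: "\<And>x y. x \<in> U \<Longrightarrow> y \<in> U \<Longrightarrow> B x y = B y x"
    and P: "subspace P" "P \<subseteq> U" "\<And>x. x \<in> P \<Longrightarrow> x \<noteq> 0 \<Longrightarrow> B x x > 0"
      "dim P = pos_index B U"
    and x: "x \<in> U" "\<forall>y\<in>P. B x y = 0"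
  shows "B x x \<le> 0"
proof (rule ccontr)
  assume "\<not> B x x \<le> 0"
  hence pos: "B x x > 0" by simp
  have spanP: "span P = P" using span_eq_iff P(1) by blast
  have "x \<notin> P" using x(2) pos by auto
  hence "x \<notin> span P" unfolding spanP .
  \<comment> \<open>Adding \<open>x\<close> to \<open>P\<close> would give a larger positive definite subspace.\<close>
  define S where "S = span (insert x P)"
  have "dim S = dim P + 1" unfolding S_def using \<open>x \<notin> span P\<close> by (simp add: dim_insert)
  moreover have "dim S \<le> pos_index B U"
  proof (rule dim_le_pos_index)
    show "subspace S" unfolding S_def by simp
    show "S \<subseteq> U" unfolding S_def using x(1) P(2) U by (intro span_minimal) auto
    fix z assume "z \<in> S" "z \<noteq> 0"
    then obtain k where "z - k *\<^sub>R x \<in> span P" unfolding S_def span_insert by blast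
    define y where "y = z - k *\<^sub>R x"
    have y: "y \<in> P" "z = y + k *\<^sub>R x"
      using \<open>z - k *\<^sub>R x \<in> span P\<close> unfolding y_def spanP by simp_all
    have "B x y = 0" "B y x = 0" using x sym[of y x] y(1) P(2) by auto
    hence Bz: "B z z = B y y + (k * k) * B x x" unfolding y(2)
      by (simp only: bilinear_ladd[OF B] bilinear_radd[OF B] bilinear_lmul[OF B] bilinear_rmul[OF B])
        (simp add: algebra_simps)
    have kx: "(k * k) * B x x \<ge> 0" using pos by simp
    show "B z z > 0"
    proof (cases "y = 0")
      case True
      hence "k \<noteq> 0" using \<open>z \<noteq> 0\<close> y(2) by auto
      hence "k * k > 0" using not_real_square_gt_zero[of k] by blast
      hence "(k * k) * B x x > 0" using pos by (rule mult_pos_pos)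
      thus ?thesis using Bz True bilinear_lzero[OF B] by simp
    next
      case False
      thus ?thesis using Bz kx P(3)[OF y(1)] by linarith
    qed
  qed
  ultimately show False using P(4) by simp
qed

theorem sylvester_inertia:
  fixes B :: "'a::euclidean_space \<Rightarrow> 'a \<Rightarrow> real"
  assumes U: "subspace U" and B: "bilinear B"
    and sym: "\<And>x y. x \<in> U \<Longrightarrow> y \<in> U \<Longrightarrow> B x y = B y x"
  shows "pos_index B U + pos_index (\<lambda>x y. - B x y) U + dim (form_radical B U) = dim U"
proof (rule antisym[OF pos_index_add_neg_index_le[OF assms]])
  obtain P where P: "subspace P" "P \<subseteq> U" "\<And>x. x \<in> P \<Longrightarrow> x \<noteq> 0 \<Longrightarrow> B x x > 0"
    "dim P = pos_index B U" using pos_index_obtain[OF U, of B] by blast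
  define P' where "P' = {x \<in> U. \<forall>y\<in>P. B x y = 0}"
  have P': "subspace P'" "P' \<subseteq> U" unfolding P'_def using subspace_form_orth[OF U B] by auto
  have "dim P' \<le> pos_index (\<lambda>x y. - B x y) U + dim (form_radical B P')"
  proof (rule dim_semidefinite_le[OF P' B])
    show "B x y = B y x" if "x \<in> P'" "y \<in> P'" for x y using that P'(2) sym by auto
    show "B x x \<le> 0" if "x \<in> P'" for x
      using that max_pos_form_orth_nonpos[OF U B sym P] by (auto simp: P'_def)
  qed
  moreover have "form_radical B P' \<subseteq> form_radical B U"
  proof
    fix x assume x: "x \<in> form_radical B P'"
    have "B x (y + z) = 0" if "y \<in> P" "z \<in> P'" for y z
      using x that by (auto simp: form_radical_def P'_def bilinear_radd[OF B])
    thus "x \<in> form_radical B U"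
      using x P'(2) form_orth_decomp[OF U B P(1-3)] unfolding form_radical_def P'_def[symmetric]
      by blast
  qed
  hence "dim (form_radical B P') \<le> dim (form_radical B U)" by (rule dim_subset)
  ultimately show "dim U \<le> pos_index B U + pos_index (\<lambda>x y. - B x y) U + dim (form_radical B U)"
    using dim_le_add_dim_form_orth[OF U B, of P] P(4) unfolding P'_def by linarith
qed

section \<open>Ordered bases and determinants\<close>

lemma sum_distinct_set_conv_nth:
  assumes "distinct bs"
  shows "(\<Sum>x\<in>set bs. g x) = (\<Sum>j<length bs. g (bs ! j))"
proof -
  have "set bs = (!) bs ` {..<length bs}" by (auto simp: in_set_conv_nth)
  moreover have "inj_on ((!) bs) {..<length bs}" using assms by (simp add: inj_on_nth)
  ultimately show ?thesis by (simp add: sum.reindex)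
qed

lemma sum_lessThan_add:
  fixes g :: "nat \<Rightarrow> 'a::comm_monoid_add"
  shows "(\<Sum>i<a + b. g i) = (\<Sum>i<a. g i) + (\<Sum>j<b. g (a + j))"
  by (induction b) (simp_all add: add.assoc)

lemma sum_nth_append:
  "(\<Sum>i<length (xs @ ys). w i *\<^sub>R (xs @ ys) ! i) =
   (\<Sum>i<length xs. w i *\<^sub>R xs ! i) + (\<Sum>j<length ys. w (length xs + j) *\<^sub>R ys ! j)"
proof -
  have "(\<Sum>i<length (xs @ ys). w i *\<^sub>R (xs @ ys) ! i)
      = (\<Sum>i<length xs. w i *\<^sub>R (xs @ ys) ! i)
        + (\<Sum>j<length ys. w (length xs + j) *\<^sub>R (xs @ ys) ! (length xs + j))"
    unfolding length_append by (rule sum_lessThan_add)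
  also have "(\<Sum>i<length xs. w i *\<^sub>R (xs @ ys) ! i) = (\<Sum>i<length xs. w i *\<^sub>R xs ! i)"
    by (rule sum.cong) (simp_all add: nth_append)
  also have "(\<Sum>j<length ys. w (length xs + j) *\<^sub>R (xs @ ys) ! (length xs + j))
      = (\<Sum>j<length ys. w (length xs + j) *\<^sub>R ys ! j)"
    by (rule sum.cong) (simp_all add: nth_append)
  finally show ?thesis .
qed

lemma basis_list_subspace: "basis_list L bs \<Longrightarrow> subspace L"
  unfolding basis_list_def by auto

lemma basis_list_subset: "basis_list L bs \<Longrightarrow> set bs \<subseteq> L"
  unfolding basis_list_def using span_superset by blast

lemma length_basis_list:
  assumes "basis_list L bs"
  shows "length bs = dim L"
proof -
  have d: "distinct bs" and ind: "independent (set bs)" and sp: "span (set bs) = L"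
    using assms unfolding basis_list_def by auto
  have "dim L = card (set bs)" using dim_span_eq_card_independent[OF ind] sp by simp
  thus ?thesis using distinct_card[OF d] by simp
qed

lemma basis_list_coeffs_eq_0:
  assumes "basis_list L bs" "(\<Sum>j<length bs. v j *\<^sub>R bs ! j) = 0" "j < length bs"
  shows "v j = 0"
proof -
  have d: "distinct bs" and ind: "independent (set bs)" using assms(1) unfolding basis_list_def by auto
  define c where "c = v \<circ> inv_into {..<length bs} ((!) bs)"
  have inj: "inj_on ((!) bs) {..<length bs}" using d by (simp add: inj_on_nth)
  have cj: "c (bs ! i) = v i" if "i < length bs" for i
    unfolding c_def using inj that by (simp add: inv_into_f_f)
  have "(\<Sum>x\<in>set bs. c x *\<^sub>R x) = (\<Sum>i<length bs. c (bs ! i) *\<^sub>R bs ! i)"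
    by (rule sum_distinct_set_conv_nth[OF d])
  also have "\<dots> = 0" using assms(2) by (simp add: cj)
  finally have "\<forall>x\<in>set bs. c x = 0" using ind by (simp add: independent_explicit)
  hence "c (bs ! j) = 0" using assms(3) by simp
  thus ?thesis using cj assms(3) by simp
qed

lemma basis_list_obtain_coeffs:
  assumes "basis_list L bs" "x \<in> L"
  obtains c where "x = (\<Sum>j<length bs. c j *\<^sub>R bs ! j)"
proof -
  have d: "distinct bs" and sp: "span (set bs) = L" using assms(1) unfolding basis_list_def by auto
  obtain u where "x = (\<Sum>y\<in>set bs. u y *\<^sub>R y)" using assms(2) sp span_finite[of "set bs"] by auto
  also have "\<dots> = (\<Sum>j<length bs. u (bs ! j) *\<^sub>R bs ! j)" by (rule sum_distinct_set_conv_nth[OF d])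
  finally show ?thesis by (rule that)
qed

lemma basis_list_sum_mem:
  assumes "basis_list L bs"
  shows "(\<Sum>j<length bs. c j *\<^sub>R bs ! j) \<in> L"
proof -
  have "(\<Sum>j<length bs. c j *\<^sub>R bs ! j) \<in> span (set bs)"
    by (rule span_sum) (simp add: span_scale span_base)
  thus ?thesis using assms unfolding basis_list_def by simp
qed

lemma basis_listI_coeffs:
  assumes "span (set xs) = L"
    and indep: "\<And>v. (\<Sum>j<length xs. v j *\<^sub>R xs ! j) = 0 \<Longrightarrow> \<forall>j<length xs. v j = 0"
  shows "basis_list L xs"
proof -
  have d: "distinct xs"
  proof (rule ccontr)
    assume "\<not> distinct xs"
    then obtain i j where ij: "i < length xs" "j < length xs" "i \<noteq> j" "xs ! i = xs ! j"
      by (auto simp: distinct_conv_nth)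
    define v where "v k = (if k = i then 1 else if k = j then -1 else (0::real))" for k
    have "(\<Sum>k<length xs. v k *\<^sub>R xs ! k) = (\<Sum>k\<in>{i,j}. v k *\<^sub>R xs ! k)"
      by (rule sum.mono_neutral_right) (use ij in \<open>auto simp: v_def\<close>)
    also have "\<dots> = 0" using ij by (simp add: v_def)
    finally have "\<forall>j<length xs. v j = 0" by (rule indep)
    hence "v i = 0" using ij(1) by blast
    thus False by (simp add: v_def)
  qed
  have "independent (set xs)" unfolding independent_explicit
  proof (intro conjI allI impI ballI)
    fix c x assume c: "(\<Sum>v\<in>set xs. c v *\<^sub>R v) = 0" and x: "x \<in> set xs"
    have "(\<Sum>k<length xs. c (xs ! k) *\<^sub>R xs ! k) = 0"
      using c sum_distinct_set_conv_nth[OF d, of "\<lambda>v. c v *\<^sub>R v"] by simp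
    hence "\<forall>k<length xs. c (xs ! k) = 0" by (rule indep)
    thus "c x = 0" using x by (auto simp: in_set_conv_nth)
  qed simp
  thus ?thesis using d assms(1) unfolding basis_list_def by auto
qed

lemma basis_list_exists:
  assumes "subspace (L :: 'g::finite sympvec set)"
  obtains bs where "basis_list L bs"
proof -
  obtain B where B: "B \<subseteq> L" "independent B" "L \<subseteq> span B" "card B = dim L"
    using basis_exists by blast
  have "finite B" using B(2) by (simp add: finiteI_independent)
  then obtain bs where "set bs = B" "distinct bs" using finite_distinct_list by blast
  moreover have "span B = L" using span_subspace[OF B(1) B(3) assms] .
  ultimately have "basis_list L bs" using B(2) unfolding basis_list_def by simp
  thus ?thesis by (rule that)
qed

lemma basis_list_extend:
  assumes c: "basis_list K c" and KL: "K \<subseteq> L" and L: "subspace L"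
  obtains a where "basis_list L (c @ a)"
proof -
  have ind: "independent (set c)" and dc: "distinct c" using c unfolding basis_list_def by auto
  have "set c \<subseteq> L" using basis_list_subset[OF c] KL by auto
  then obtain B where B: "set c \<subseteq> B" "B \<subseteq> L" "independent B" "L \<subseteq> span B"
    using maximal_independent_subset_extend[OF _ ind] by blast
  have "finite (B - set c)" using B(3) by (simp add: finiteI_independent)
  then obtain a where a: "set a = B - set c" "distinct a" using finite_distinct_list by blast
  have "distinct (c @ a)" using a dc by auto
  moreover have "set (c @ a) = B" using a B(1) by auto
  moreover have "span B = L" using span_subspace[OF B(2) B(4) L] .
  ultimately have "basis_list L (c @ a)" using B(3) unfolding basis_list_def by simp
  thus ?thesis by (rule that)
qed

lemma basis_list_image:
  assumes f: "linear f" "inj f" and bs: "basis_list L bs"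
  shows "basis_list (f ` L) (map f bs)"
proof -
  have "distinct bs" "independent (set bs)" "span (set bs) = L"
    using bs unfolding basis_list_def by auto
  moreover have "inj_on f (span (set bs))" using inj_on_subset[OF f(2) subset_UNIV] .
  ultimately have "distinct (map f bs)" "independent (f ` set bs)" "span (f ` set bs) = f ` L"
    using inj_on_subset[OF f(2) subset_UNIV] linear_independent_injective_image[OF f(1)]
      linear_span_image[OF f(1)] by (auto simp: distinct_map)
  thus ?thesis unfolding basis_list_def by simp
qed

lemma basis_list_negate_nth:
  assumes "basis_list L xs" "k < length xs"
  shows "basis_list L (xs[k := - xs ! k])"
proof (rule basis_listI_coeffs)
  let ?ys = "xs[k := - xs ! k]"
  have "set ?ys \<subseteq> span (set xs)"
  proof
    fix y assume "y \<in> set ?ys"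
    then obtain j where j: "j < length xs" "y = ?ys ! j" by (auto simp: in_set_conv_nth)
    have "xs ! j \<in> span (set xs)" using j(1) by (intro span_base) simp
    thus "y \<in> span (set xs)" using j by (cases "j = k") (simp_all add: span_neg)
  qed
  moreover have "set xs \<subseteq> span (set ?ys)"
  proof
    fix y assume "y \<in> set xs"
    then obtain j where j: "j < length xs" "y = xs ! j" by (auto simp: in_set_conv_nth)
    have "?ys ! j \<in> span (set ?ys)" using j(1) by (intro span_base) simp
    thus "y \<in> span (set ?ys)" using j assms(2) span_neg[of "?ys ! k"]
      by (cases "j = k") simp_all
  qed
  ultimately show "span (set ?ys) = L" using assms(1) span_eq unfolding basis_list_def by blast
next
  fix v assume h: "(\<Sum>j<length (xs[k := - xs ! k]). v j *\<^sub>R xs[k := - xs ! k] ! j) = 0"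
  define v' where "v' j = (if j = k then - v j else v j)" for j
  have "(\<Sum>j<length xs. v' j *\<^sub>R xs ! j) = (\<Sum>j<length (xs[k := - xs ! k]). v j *\<^sub>R xs[k := - xs ! k] ! j)"
    by (intro sum.cong) (auto simp: v'_def nth_list_update)
  hence "\<forall>j<length xs. v' j = 0" using h basis_list_coeffs_eq_0[OF assms(1)] by simp
  thus "\<forall>j<length (xs[k := - xs ! k]). v j = 0" by (auto simp: v'_def split: if_splits)
qed

lemma ldet_neq_0:
  assumes "\<And>v. \<forall>i<m. (\<Sum>j<m. M i j * v j) = 0 \<Longrightarrow> \<forall>j<m. v j = 0"
  shows "ldet m M \<noteq> 0"
proof
  let ?A = "mat m m (\<lambda>(i, j). M i j)"
  assume "ldet m M = 0"
  hence "Determinant.det ?A = 0"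
    unfolding ldet_def Determinant.det_def by (simp add: atLeast0LessThan)
  then obtain v where v: "v \<in> carrier_vec m" "v \<noteq> 0\<^sub>v m" "?A *\<^sub>v v = 0\<^sub>v m"
    using det_0_iff_vec_prod_zero_field[of ?A m] by auto
  have "\<forall>i<m. (\<Sum>j<m. M i j * Matrix.vec_index v j) = 0"
  proof (intro allI impI)
    fix i assume i: "i < m"
    have "Matrix.vec_index (?A *\<^sub>v v) i = 0" using v(3) i by simp
    thus "(\<Sum>j<m. M i j * Matrix.vec_index v j) = 0" using i v(1)
      by (simp add: mult_mat_vec_def scalar_prod_def atLeast0LessThan)
  qed
  hence "\<forall>j<m. Matrix.vec_index v j = 0" by (rule assms)
  hence "v = 0\<^sub>v m" using v(1) by (intro eq_vecI) auto
  with v(2) show False by simp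
qed

lemma ldet_negate_row:
  assumes "k < m"
  shows "ldet m (\<lambda>i j. if i = k then - M i j else M i j) = - ldet m M"
proof -
  have k: "k \<in> {..<m}" using assms by simp
  have "(\<Prod>i<m. (if i = k then - M i (p i) else M i (p i))) = - (\<Prod>i<m. M i (p i))" for p
  proof -
    have "(\<Prod>i<m. (if i = k then - M i (p i) else M i (p i)))
        = - M k (p k) * (\<Prod>i\<in>{..<m} - {k}. (if i = k then - M i (p i) else M i (p i)))"
      using prod.remove[OF finite_lessThan k, of "\<lambda>i. if i = k then - M i (p i) else M i (p i)"]
      by simp
    also have "(\<Prod>i\<in>{..<m} - {k}. (if i = k then - M i (p i) else M i (p i)))
        = (\<Prod>i\<in>{..<m} - {k}. M i (p i))"
      by (intro prod.cong) auto
    also have "- M k (p k) * (\<Prod>i\<in>{..<m} - {k}. M i (p i)) = - (\<Prod>i<m. M i (p i))"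
      using prod.remove[OF finite_lessThan k, of "\<lambda>i. M i (p i)"] by simp
    finally show ?thesis .
  qed
  thus ?thesis unfolding ldet_def by (simp add: sum_negf)
qed

lemma basis_change_matrix:
  assumes xs: "basis_list L xs" and ys: "basis_list L ys"
  obtains M where "\<And>j. j < length xs \<Longrightarrow> ys ! j = (\<Sum>i<length xs. M i j *\<^sub>R xs ! i)"
    "ldet (length xs) M \<noteq> 0"
proof -
  let ?n = "length xs"
  have lys: "length ys = ?n" using length_basis_list[OF xs] length_basis_list[OF ys] by simp
  have ex: "\<exists>u. ys ! j = (\<Sum>i<?n. u i *\<^sub>R xs ! i)" if "j < ?n" for j
  proof -
    have "ys ! j \<in> L" using basis_list_subset[OF ys] nth_mem[of j ys] that lys by auto
    thus ?thesis using basis_list_obtain_coeffs[OF xs] by blast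
  qed
  define M where "M i j = (SOME u. ys ! j = (\<Sum>i<?n. u i *\<^sub>R xs ! i)) i" for i j
  have M: "ys ! j = (\<Sum>i<?n. M i j *\<^sub>R xs ! i)" if "j < ?n" for j
    unfolding M_def using someI_ex[OF ex[OF that]] .
  have "ldet ?n M \<noteq> 0"
  proof (rule ldet_neq_0)
    fix v assume h: "\<forall>i<?n. (\<Sum>j<?n. M i j * v j) = 0"
    have "(\<Sum>j<?n. v j *\<^sub>R ys ! j) = (\<Sum>j<?n. \<Sum>i<?n. (v j * M i j) *\<^sub>R xs ! i)"
      by (simp add: M scaleR_sum_right)
    also have "\<dots> = (\<Sum>i<?n. (\<Sum>j<?n. M i j * v j) *\<^sub>R xs ! i)"
      by (subst sum.swap) (simp add: scaleR_sum_left mult.commute)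
    also have "\<dots> = 0" using h by simp
    finally show "\<forall>j<?n. v j = 0" using basis_list_coeffs_eq_0[OF ys] lys by auto
  qed
  with M show ?thesis by (rule that)
qed

lemma basis_list_oriented_extension:
  assumes ca: "basis_list L (c @ a)" and "a \<noteq> []" and ys: "basis_list L ys"
  obtains a' where "basis_list L (c @ a')" "same_orient (c @ a') ys"
proof -
  define xs where "xs = c @ a"
  define n where "n = length xs"
  have xs: "basis_list L xs" using ca xs_def by simp
  have lys: "length ys = n" using length_basis_list[OF xs] length_basis_list[OF ys] n_def by simp
  obtain M where M: "\<And>j. j < n \<Longrightarrow> ys ! j = (\<Sum>i<n. M i j *\<^sub>R xs ! i)" "ldet n M \<noteq> 0"
    using basis_change_matrix[OF xs ys] unfolding n_def by blast
  show ?thesis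
  proof (cases "ldet n M > 0")
    case True
    hence "same_orient xs ys" unfolding same_orient_def using lys M(1) n_def by auto
    thus ?thesis using that ca xs_def by blast
  next
    case False
    \<comment> \<open>Negating the last vector of \<open>a\<close> reverses the orientation.\<close>
    hence neg: "ldet n M < 0" using M(2) by simp
    define k where "k = n - 1"
    have kn: "k < n" using \<open>a \<noteq> []\<close> unfolding k_def n_def xs_def by simp
    define a' where "a' = a[length a - 1 := - a ! (length a - 1)]"
    have "k = length c + (length a - 1)" using \<open>a \<noteq> []\<close> unfolding k_def n_def xs_def by (cases a) simp_all
    hence xs': "c @ a' = xs[k := - xs ! k]"
      unfolding a'_def xs_def by (simp add: list_update_append nth_append)
    have "basis_list L (c @ a')" unfolding xs' using basis_list_negate_nth[OF xs] kn n_def by simp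
    moreover have "same_orient (c @ a') ys"
    proof -
      define M' where "M' i j = (if i = k then - M i j else M i j)" for i j
      have "ldet n M' > 0" unfolding M'_def using ldet_negate_row[OF kn, of M] neg by simp
      moreover have "ys ! j = (\<Sum>i<n. M' i j *\<^sub>R (c @ a') ! i)" if "j < n" for j
      proof -
        have "(\<Sum>i<n. M' i j *\<^sub>R (c @ a') ! i) = (\<Sum>i<n. M i j *\<^sub>R xs ! i)"
          unfolding xs' M'_def by (intro sum.cong) (auto simp: n_def)
        thus ?thesis using M(1)[OF that] by simp
      qed
      ultimately show ?thesis unfolding same_orient_def using lys xs' n_def by auto
    qed
    ultimately show ?thesis by (rule that)
  qed
qed

section \<open>Symplectic complements and lagrangians\<close>

lemma bilinear_omega: "bilinear omega"
  unfolding bilinear_def omega_def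
  by (intro allI conjI linearI)
    (simp_all add: inner_add_left inner_add_right inner_diff_left inner_diff_right algebra_simps)

lemmas omega_zero_left [simp] = bilinear_lzero[OF bilinear_omega]
  and omega_zero_right [simp] = bilinear_rzero[OF bilinear_omega]
  and omega_add_left = bilinear_ladd[OF bilinear_omega]
  and omega_add_right = bilinear_radd[OF bilinear_omega]
  and omega_diff_left = bilinear_lsub[OF bilinear_omega]
  and omega_diff_right = bilinear_rsub[OF bilinear_omega]

lemma omega_scale_left: "omega (c *\<^sub>R x) y = c * omega x y"
  using bilinear_lmul[OF bilinear_omega] by simp

lemma omega_scale_right: "omega x (c *\<^sub>R y) = c * omega x y"
  using bilinear_rmul[OF bilinear_omega] by simp

lemma omega_sum_left: "omega (\<Sum>i\<in>A. u i) y = (\<Sum>i\<in>A. omega (u i) y)"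
proof -
  have "linear (\<lambda>x. omega x y)" using bilinear_omega unfolding bilinear_def by blast
  from linear_sum[OF this, of u A] show ?thesis by simp
qed

lemma omega_sum_right: "omega x (\<Sum>i\<in>A. u i) = (\<Sum>i\<in>A. omega x (u i))"
proof -
  have "linear (omega x)" using bilinear_omega unfolding bilinear_def by blast
  from linear_sum[OF this, of u A] show ?thesis by simp
qed

lemma omega_antisym: "omega x y = - omega y x"
  by (simp add: omega_def inner_commute)

lemma omega_nondegenerate:
  assumes "\<And>y. omega x y = 0"
  shows "x = 0"
proof -
  have "inner x x = omega x (- snd x, fst x)" by (simp add: omega_def inner_prod_def)
  thus ?thesis using assms by simp
qed

definition symp_compl :: "'g::finite sympvec set \<Rightarrow> 'g sympvec set" where
  "symp_compl S = {x. \<forall>y\<in>S. omega x y = 0}"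

lemma subspace_symp_compl: "subspace (symp_compl S)"
  unfolding subspace_def symp_compl_def
  by (simp add: omega_add_left omega_scale_left)

lemma symp_compl_antimono: "S \<subseteq> T \<Longrightarrow> symp_compl T \<subseteq> symp_compl S"
  unfolding symp_compl_def by auto

lemma dim_symp_compl:
  fixes S :: "'g::finite sympvec set"
  assumes "subspace S"
  shows "dim (symp_compl S) + dim S = 2 * CARD('g)"
proof -
  define J :: "'g sympvec \<Rightarrow> 'g sympvec" where "J y = (snd y, - fst y)" for y
  have lin: "linear J" unfolding J_def by (intro linearI) simp_all
  have "inj J" unfolding J_def inj_def by (simp add: prod_eq_iff)
  hence dimJ: "dim (J ` S) = dim S"
    using dim_image_eq[OF lin] inj_on_subset[of J UNIV] by blast
  have omegaJ: "omega y x = inner (J x) y" for x y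
    by (cases x, cases y) (simp add: omega_def J_def inner_commute)
  have "symp_compl S = {y. \<forall>x\<in>J ` S. Linear_Algebra.orthogonal x y}"
    unfolding symp_compl_def Linear_Algebra.orthogonal_def omegaJ by blast
  moreover have "subspace (J ` S)" using linear_subspace_image[OF lin assms] .
  ultimately show ?thesis using dim_subspace_orthogonal_to_vectors[of "J ` S" UNIV] dimJ by simp
qed

lemma symp_compl_symp_compl:
  assumes "subspace S"
  shows "symp_compl (symp_compl S) = S"
proof -
  have "omega x y = 0" if "x \<in> S" "y \<in> symp_compl S" for x y
    using that omega_antisym[of x y] unfolding symp_compl_def by simp
  hence "S \<subseteq> symp_compl (symp_compl S)" unfolding symp_compl_def[of "symp_compl S"] by blast
  moreover have "dim (symp_compl (symp_compl S)) = dim S"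
    using dim_symp_compl[OF assms] dim_symp_compl[OF subspace_symp_compl, of S] by simp
  ultimately show ?thesis
    using subspace_dim_equal[OF assms subspace_symp_compl] by (metis order_refl)
qed

lemma symp_compl_sums:
  assumes "subspace A" "subspace B"
  shows "symp_compl {x + y |x y. x \<in> A \<and> y \<in> B} = symp_compl A \<inter> symp_compl B"
proof
  have "A \<subseteq> {x + y |x y. x \<in> A \<and> y \<in> B}"
  proof
    fix x assume "x \<in> A"
    thus "x \<in> {x + y |x y. x \<in> A \<and> y \<in> B}"
      using subspace_0[OF assms(2)] by (intro CollectI exI[of _ x] exI[of _ 0]) simp
  qed
  moreover have "B \<subseteq> {x + y |x y. x \<in> A \<and> y \<in> B}"
  proof
    fix y assume "y \<in> B"
    thus "y \<in> {x + y |x y. x \<in> A \<and> y \<in> B}"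
      using subspace_0[OF assms(1)] by (intro CollectI exI[of _ 0] exI[of _ y]) simp
  qed
  ultimately show "symp_compl {x + y |x y. x \<in> A \<and> y \<in> B} \<subseteq> symp_compl A \<inter> symp_compl B"
    using symp_compl_antimono by blast
  show "symp_compl A \<inter> symp_compl B \<subseteq> symp_compl {x + y |x y. x \<in> A \<and> y \<in> B}"
  proof
    fix z assume z: "z \<in> symp_compl A \<inter> symp_compl B"
    have "omega z (x + y) = 0" if "x \<in> A" "y \<in> B" for x y
      using z that by (simp add: symp_compl_def omega_add_right)
    thus "z \<in> symp_compl {x + y |x y. x \<in> A \<and> y \<in> B}" unfolding symp_compl_def by blast
  qed
qed

lemma lagrangian_iff: "lagrangian L \<longleftrightarrow> subspace L \<and> symp_compl L = L"
  unfolding lagrangian_def symp_compl_def by (intro conj_cong refl) (rule eq_commute)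

lemma lagrangian_omega_eq_0:
  assumes "lagrangian L" "x \<in> L" "y \<in> L"
  shows "omega x y = 0"
proof -
  have "x \<in> symp_compl L" using assms(1,2) unfolding lagrangian_iff by simp
  thus ?thesis using assms(3) unfolding symp_compl_def by blast
qed

lemma lagrangian_memI:
  assumes "lagrangian L" "\<And>y. y \<in> L \<Longrightarrow> omega x y = 0"
  shows "x \<in> L"
proof -
  have "x \<in> symp_compl L" using assms(2) unfolding symp_compl_def by blast
  thus ?thesis using assms(1) unfolding lagrangian_iff by simp
qed

lemma dim_lagrangian:
  fixes L :: "'g::finite sympvec set"
  assumes "lagrangian L"
  shows "dim L = CARD('g)"
  using dim_symp_compl[of L] assms unfolding lagrangian_iff by simp

lemma lagrangianI_dim:
  fixes L :: "'g::finite sympvec set"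
  assumes "subspace L" "\<And>x y. x \<in> L \<Longrightarrow> y \<in> L \<Longrightarrow> omega x y = 0" "dim L = CARD('g)"
  shows "lagrangian L"
proof -
  have "L \<subseteq> symp_compl L" using assms(2) unfolding symp_compl_def by auto
  moreover have "dim (symp_compl L) \<le> dim L" using dim_symp_compl[OF assms(1)] assms(3) by simp
  ultimately have "L = symp_compl L" by (rule subspace_dim_equal[OF assms(1) subspace_symp_compl])
  thus ?thesis unfolding lagrangian_iff using assms(1) by blast
qed

lemma lagrangian_lambda0: "lagrangian (lambda0 :: 'g::finite sympvec set)"
proof (rule lagrangianI_dim)
  show "subspace (lambda0 :: 'g sympvec set)" unfolding lambda0_def subspace_def by auto
  show "omega x y = 0" if "x \<in> lambda0" "y \<in> lambda0" for x y :: "'g sympvec"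
    using that unfolding lambda0_def omega_def by simp
  have "linear (\<lambda>v::real^'g. (v, 0::real^'g))" by (intro linearI) auto
  moreover have "lambda0 = range (\<lambda>v::real^'g. (v, 0::real^'g))"
    unfolding lambda0_def by (auto intro: prod_eqI)
  ultimately show "dim (lambda0 :: 'g sympvec set) = CARD('g)"
    using dim_image_eq[of "\<lambda>v::real^'g. (v, 0::real^'g)" UNIV] by (simp add: inj_on_def)
qed

lemma symplectic_linear: "symplectic f \<Longrightarrow> linear f"
  unfolding symplectic_def by simp

lemma symplectic_omega: "symplectic f \<Longrightarrow> omega (f x) (f y) = omega x y"
  unfolding symplectic_def by blast

lemma symplectic_inj:
  assumes "symplectic f"
  shows "inj f"
proof (rule injI)
  fix x y assume "f x = f y"
  hence "f (x - y) = 0" using linear_diff[OF symplectic_linear[OF assms], of x y] by simp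
  hence "omega (x - y) z = 0" for z using symplectic_omega[OF assms, of "x - y" z] by simp
  hence "x - y = 0" by (rule omega_nondegenerate)
  thus "x = y" by simp
qed

lemma lagrangian_symplectic_image:
  fixes f :: "'g::finite sympvec \<Rightarrow> 'g sympvec"
  assumes f: "symplectic f" and L: "lagrangian L"
  shows "lagrangian (f ` L)"
proof (rule lagrangianI_dim)
  have sL: "subspace L" using L unfolding lagrangian_iff by blast
  show "subspace (f ` L)" by (rule linear_subspace_image[OF symplectic_linear[OF f] sL])
  show "omega x y = 0" if x: "x \<in> f ` L" and y: "y \<in> f ` L" for x y
  proof -
    obtain a where a: "x = f a" "a \<in> L" using x by (rule imageE)
    obtain b where b: "y = f b" "b \<in> L" using y by (rule imageE)
    have "omega x y = omega a b" unfolding a(1) b(1) by (rule symplectic_omega[OF f])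
    also have "\<dots> = 0" by (rule lagrangian_omega_eq_0[OF L a(2) b(2)])
    finally show ?thesis .
  qed
  have "inj_on f (span L)" using symplectic_inj[OF f] inj_on_subset by blast
  hence "dim (f ` L) = dim L" by (rule dim_image_eq[OF symplectic_linear[OF f]])
  thus "dim (f ` L) = CARD('g)" using dim_lagrangian[OF L] by simp
qed

section \<open>The square of \<open>s\<close>\<close>

lemma lagrangian_subset_eq:
  assumes "lagrangian L1" "lagrangian L2" "L1 \<subseteq> L2"
  shows "L1 = L2"
  using symp_compl_antimono[OF assms(3)] assms(1,2) assms(3) unfolding lagrangian_iff by auto

lemma eps_witness_exists:
  fixes L1 L2 :: "'g::finite sympvec set"
  assumes L1: "lagrangian L1" and L2: "lagrangian L2" and "L1 \<noteq> L2"
    and a: "basis_list L1 a" and b: "basis_list L2 b"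
  shows "\<exists>c a' b'. basis_list (L1 \<inter> L2) c \<and> basis_list L1 (c @ a') \<and> same_orient (c @ a') a
           \<and> basis_list L2 (c @ b') \<and> same_orient (c @ b') b"
proof -
  have s1: "subspace L1" and s2: "subspace L2" using L1 L2 by (simp_all add: lagrangian_iff)
  obtain c where c: "basis_list (L1 \<inter> L2) c"
    using basis_list_exists[OF subspace_inter[OF s1 s2]] by blast
  obtain a0 where a0: "basis_list L1 (c @ a0)" using basis_list_extend[OF c _ s1] by blast
  obtain b0 where b0: "basis_list L2 (c @ b0)" using basis_list_extend[OF c _ s2] by blast
  \<comment> \<open>If \<open>c\<close> spanned \<open>L1\<close> or \<open>L2\<close>, one lagrangian would contain the other.\<close>
  have "a0 \<noteq> []"
  proof
    assume "a0 = []"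
    hence "span (set c) = L1" using a0 by (simp add: basis_list_def)
    moreover have "span (set c) = L1 \<inter> L2" using c by (simp add: basis_list_def)
    ultimately have "L1 \<subseteq> L2" by (metis Int_lower2)
    thus False using lagrangian_subset_eq[OF L1 L2] \<open>L1 \<noteq> L2\<close> by blast
  qed
  then obtain a1 where "basis_list L1 (c @ a1)" "same_orient (c @ a1) a"
    using basis_list_oriented_extension[OF a0 _ a] by blast
  moreover have "b0 \<noteq> []"
  proof
    assume "b0 = []"
    hence "span (set c) = L2" using b0 by (simp add: basis_list_def)
    moreover have "span (set c) = L1 \<inter> L2" using c by (simp add: basis_list_def)
    ultimately have "L2 \<subseteq> L1" by (metis Int_lower1)
    thus False using lagrangian_subset_eq[OF L2 L1] \<open>L1 \<noteq> L2\<close> by blast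
  qed
  then obtain b1 where "basis_list L2 (c @ b1)" "same_orient (c @ b1) b"
    using basis_list_oriented_extension[OF b0 _ b] by blast
  ultimately show ?thesis using c by blast
qed

lemma ldet_omega_complements_neq_0:
  fixes L1 L2 :: "'g::finite sympvec set"
  assumes L1: "lagrangian L1" and L2: "lagrangian L2"
    and c: "basis_list (L1 \<inter> L2) c" and a: "basis_list L1 (c @ a)" and b: "basis_list L2 (c @ b)"
  shows "ldet (length a) (\<lambda>i j. omega (a ! i) (b ! j)) \<noteq> 0"
proof (rule ldet_neq_0)
  define m where "m = length a"
  have lb: "length b = m"
    using length_basis_list[OF a] length_basis_list[OF b] dim_lagrangian[OF L1] dim_lagrangian[OF L2]
    unfolding m_def by simp
  fix v assume h: "\<forall>i<m. (\<Sum>j<m. omega (a ! i) (b ! j) * v j) = 0"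
  define y where "y = (\<Sum>j<m. v j *\<^sub>R b ! j)"
  have "y \<in> L2" unfolding y_def using basis_list_subset[OF b] basis_list_subspace[OF b] lb
    by (intro subspace_sum subspace_scale) auto
  \<comment> \<open>\<open>y\<close> is \<open>omega\<close>-orthogonal to \<open>c\<close> (as \<open>L2\<close> is lagrangian) and to \<open>a\<close> (by \<open>h\<close>), hence lies in \<open>L1\<close>.\<close>
  have orth: "omega x y = 0" if x: "x \<in> L1" for x
  proof -
    obtain e where "x = (\<Sum>i<length (c @ a). e i *\<^sub>R (c @ a) ! i)"
      using basis_list_obtain_coeffs[OF a x] .
    hence x: "x = (\<Sum>i<length c. e i *\<^sub>R c ! i) + (\<Sum>j<m. e (length c + j) *\<^sub>R a ! j)"
      unfolding sum_nth_append m_def .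
    have "omega (c ! i) y = 0" if "i < length c" for i
    proof -
      have "c ! i \<in> L2" using basis_list_subset[OF c] nth_mem[OF that] by blast
      thus ?thesis using lagrangian_omega_eq_0[OF L2 _ \<open>y \<in> L2\<close>] by blast
    qed
    moreover have "omega (a ! i) y = 0" if "i < m" for i
      using h that unfolding y_def by (simp add: omega_sum_right omega_scale_right mult.commute)
    ultimately show ?thesis unfolding x by (simp add: omega_add_left omega_sum_left omega_scale_left)
  qed
  have "omega y x = 0" if "x \<in> L1" for x using orth[OF that] omega_antisym[of y x] by simp
  hence "y \<in> L1" by (rule lagrangian_memI[OF L1])
  then obtain e where e: "y = (\<Sum>i<length c. e i *\<^sub>R c ! i)"
    using basis_list_obtain_coeffs[OF c] \<open>y \<in> L2\<close> by blast
  define w where "w i = (if i < length c then e i else - v (i - length c))" for i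
  have "(\<Sum>i<length c. w i *\<^sub>R c ! i) = y" unfolding e w_def by simp
  moreover have "(\<Sum>j<length b. w (length c + j) *\<^sub>R b ! j) = - y"
    unfolding y_def w_def lb by (simp add: sum_negf)
  ultimately have "(\<Sum>i<length (c @ b). w i *\<^sub>R (c @ b) ! i) = 0"
    unfolding sum_nth_append by simp
  hence "w (length c + j) = 0" if "j < m" for j
    using basis_list_coeffs_eq_0[OF b, of w "length c + j"] that lb by simp
  thus "\<forall>j<m. v j = 0" unfolding w_def by simp
qed

lemma abs_eps_lagrangian:
  assumes L1: "lagrangian L1" and L2: "lagrangian L2"
    and a: "basis_list L1 a" and b: "basis_list L2 b"
  shows "\<bar>eps L1 a L2 b\<bar> = 1"
proof (cases "L1 = L2")
  case True
  thus ?thesis by (simp add: eps_def)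
next
  case False
  define P where "P = (\<lambda>(c, a', b'). basis_list (L1 \<inter> L2) c
                   \<and> basis_list L1 (c @ a') \<and> same_orient (c @ a') a
                   \<and> basis_list L2 (c @ b') \<and> same_orient (c @ b') b)"
  have "\<exists>t. P t" using eps_witness_exists[OF L1 L2 False a b] unfolding P_def by auto
  hence "P (SOME t. P t)" by (rule someI_ex)
  moreover obtain c a' b' where t: "(SOME t. P t) = (c, a', b')" by (cases "SOME t. P t") auto
  ultimately have "basis_list (L1 \<inter> L2) c" "basis_list L1 (c @ a')" "basis_list L2 (c @ b')"
    unfolding P_def by auto
  hence "ldet (length a') (\<lambda>i j. omega (a' ! i) (b' ! j)) \<noteq> 0"
    by (rule ldet_omega_complements_neq_0[OF L1 L2])
  moreover have "eps L1 a L2 b = sgn (ldet (length a') (\<lambda>i j. omega (a' ! i) (b' ! j)))"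
    unfolding eps_def using False t unfolding P_def by simp
  ultimately show ?thesis by (simp add: sgn_real_def)
qed

lemma s_lag_square:
  assumes "lagrangian L1" "lagrangian L2" "basis_list L1 a" "basis_list L2 b"
  shows "s_lag L1 a L2 b ^ 2 = (-1) ^ (dim L1 - dim (L1 \<inter> L2))"
proof -
  have "eps L1 a L2 b ^ 2 = 1" using abs_eps_lagrangian[OF assms] by (metis power2_abs power_one)
  hence "complex_of_real (eps L1 a L2 b) ^ 2 = 1" by (metis of_real_power of_real_1)
  moreover have "(\<i> ^ n) ^ 2 = (-1) ^ n" for n :: nat
    by (metis power2_i power_mult mult.commute)
  ultimately show ?thesis unfolding s_lag_def by (simp add: power_mult_distrib)
qed

lemma s_of_square:
  fixes f :: "'g::finite sympvec \<Rightarrow> 'g sympvec"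
  assumes f: "symplectic f"
  shows "s_of f ^ 2 = (-1) ^ (CARD('g) - dim (lambda0 \<inter> f ` lambda0))"
proof -
  have "subspace (lambda0 :: 'g sympvec set)" using lagrangian_lambda0 unfolding lagrangian_iff by blast
  then obtain a0 where "basis_list (lambda0 :: 'g sympvec set) a0" by (rule basis_list_exists)
  hence a: "basis_list lambda0 (SOME a. basis_list (lambda0 :: 'g sympvec set) a)" by (rule someI)
  have "basis_list (f ` lambda0) (map f (SOME a. basis_list (lambda0 :: 'g sympvec set) a))"
    by (rule basis_list_image[OF symplectic_linear[OF f] symplectic_inj[OF f] a])
  from s_lag_square[OF lagrangian_lambda0 lagrangian_symplectic_image[OF f lagrangian_lambda0] a this]
  show ?thesis unfolding s_of_def Let_def dim_lagrangian[OF lagrangian_lambda0] .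
qed

section \<open>The parity of \<open>n\<close>\<close>

lemma signature_eq_pos_index:
  "signature B U = int (pos_index B U) - int (pos_index (\<lambda>x y. - B x y) U)"
  unfolding signature_def pos_index_def by simp

lemma signature_cong:
  assumes "\<And>x. x \<in> U \<Longrightarrow> B x x = B' x x"
  shows "signature B U = signature B' U"
proof -
  have "pos_index B U = pos_index B' U" "pos_index (\<lambda>x y. - B x y) U = pos_index (\<lambda>x y. - B' x y) U"
    using assms by (intro pos_index_cong; simp)+
  thus ?thesis unfolding signature_eq_pos_index by simp
qed

lemma ldet_cong:
  assumes "\<And>i j. i < m \<Longrightarrow> j < m \<Longrightarrow> M i j = M' i j"
  shows "ldet m M = ldet m M'"
  unfolding ldet_def
proof (rule sum.cong[OF refl])
  fix p assume "p \<in> {p. p permutes {..<m}}"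
  hence "p i < m" if "i < m" for i using permutes_in_image[of p "{..<m}" i] that by simp
  hence "(\<Prod>i<m. M i (p i)) = (\<Prod>i<m. M' i (p i))" using assms by (intro prod.cong) simp_all
  thus "of_int (sign p) * (\<Prod>i<m. M i (p i)) = of_int (sign p) * (\<Prod>i<m. M' i (p i))" by simp
qed

lemma bilinear_sum_left:
  "bilinear F \<Longrightarrow> F (\<Sum>i\<in>A. u i) y = (\<Sum>i\<in>A. F (u i) y)"
  using linear_sum[of "\<lambda>x. F x y" u A] by (simp add: bilinear_def)

lemma bilinear_sum_right:
  "bilinear F \<Longrightarrow> F x (\<Sum>i\<in>A. u i) = (\<Sum>i\<in>A. F x (u i))"
  using linear_sum[of "F x" u A] by (simp add: bilinear_def)

lemma ldet_gram_neq_0: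
  fixes F :: "'g::finite sympvec \<Rightarrow> 'g sympvec \<Rightarrow> real"
  assumes F: "bilinear F" and w: "basis_list L w"
    and nondeg: "\<And>b. b \<in> L \<Longrightarrow> (\<And>a. a \<in> L \<Longrightarrow> F a b = 0) \<Longrightarrow> b = 0"
  shows "ldet (length w) (\<lambda>i j. F (w ! i) (w ! j)) \<noteq> 0"
proof (rule ldet_neq_0)
  fix v assume h: "\<forall>i<length w. (\<Sum>j<length w. F (w ! i) (w ! j) * v j) = 0"
  define b where "b = (\<Sum>j<length w. v j *\<^sub>R w ! j)"
  have "F a b = 0" if a: "a \<in> L" for a
  proof -
    have "F (w ! i) b = 0" if "i < length w" for i
      using h that unfolding b_def
      by (simp add: bilinear_sum_right[OF F] bilinear_rmul[OF F] mult.commute)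
    moreover obtain e where "a = (\<Sum>i<length w. e i *\<^sub>R w ! i)"
      using basis_list_obtain_coeffs[OF w a] .
    ultimately show ?thesis by (simp add: bilinear_sum_left[OF F] bilinear_lmul[OF F])
  qed
  hence "b = 0" using nondeg basis_list_sum_mem[OF w] unfolding b_def by blast
  thus "\<forall>j<length w. v j = 0" using basis_list_coeffs_eq_0[OF w, of v] unfolding b_def by blast
qed

definition fixspace :: "('g::finite sympvec \<Rightarrow> 'g sympvec) \<Rightarrow> 'g sympvec set" where
  "fixspace f = {x. f x = x}"

context
  fixes f :: "'g::finite sympvec \<Rightarrow> 'g sympvec"
  assumes f: "symplectic f"
begin

lemma linear_diff_id: "linear (\<lambda>x. f x - x)"
  using symplectic_linear[OF f] by (intro linearI) (simp_all add: linear_add linear_scale algebra_simps)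

lemma fixspace_eq_kernel: "fixspace f = {x. f x - x = 0}"
  unfolding fixspace_def by simp

lemma subspace_fixspace: "subspace (fixspace f)"
  unfolding fixspace_eq_kernel using linear_subspace_kernel[OF linear_diff_id] .

lemma subspace_imgW: "subspace (imgW f)"
  unfolding imgW_def using linear_subspace_image[OF linear_diff_id subspace_UNIV] .

lemma dim_imgW_add_dim_fixspace: "dim (imgW f) + dim (fixspace f) = 2 * CARD('g)"
  using dim_image_add_dim_kernel[OF linear_diff_id subspace_UNIV]
  unfolding imgW_def fixspace_eq_kernel by simp

lemma imgW_eq_symp_compl_fixspace: "imgW f = symp_compl (fixspace f)"
proof -
  have "omega (f x - x) n = 0" if "n \<in> fixspace f" for x n
    using symplectic_omega[OF f, of x n] that by (simp add: fixspace_def omega_diff_left)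
  hence "imgW f \<subseteq> symp_compl (fixspace f)" unfolding imgW_def symp_compl_def by auto
  moreover have "dim (symp_compl (fixspace f)) \<le> dim (imgW f)"
    using dim_symp_compl[OF subspace_fixspace] dim_imgW_add_dim_fixspace by simp
  ultimately show ?thesis using subspace_dim_equal[OF subspace_imgW subspace_symp_compl] by blast
qed

lemma lagrangian_inter_imgW:
  assumes "lagrangian L"
  shows "L \<inter> imgW f = symp_compl {x + y |x y. x \<in> L \<and> y \<in> fixspace f}"
  using assms symp_compl_sums[OF _ subspace_fixspace, of L]
  unfolding imgW_eq_symp_compl_fixspace lagrangian_iff by simp

lemma dim_lagrangian_inter_imgW:
  assumes L: "lagrangian L"
  shows "dim (L \<inter> imgW f) + dim (fixspace f) = CARD('g) + dim (L \<inter> fixspace f)"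
proof -
  have sL: "subspace L" using L by (simp add: lagrangian_iff)
  define S where "S = {x + y |x y. x \<in> L \<and> y \<in> fixspace f}"
  have "subspace S" unfolding S_def by (rule subspace_sums[OF sL subspace_fixspace])
  hence "dim (L \<inter> imgW f) + dim S = 2 * CARD('g)"
    using dim_symp_compl lagrangian_inter_imgW[OF L] unfolding S_def by simp
  moreover have "dim S + dim (L \<inter> fixspace f) = dim L + dim (fixspace f)"
    unfolding S_def by (rule dim_sums_Int[OF sL subspace_fixspace])
  ultimately show ?thesis using dim_lagrangian[OF L] by simp
qed

lemma dim_inter_image_diff_id:
  assumes L: "subspace L"
  shows "dim (L \<inter> (\<lambda>x. f x - x) ` L) + dim (L \<inter> fixspace f) = dim (L \<inter> f ` L)"
proof -
  define S where "S = L \<inter> {x. f x \<in> L}"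
  have sS: "subspace S" unfolding S_def using L symplectic_linear[OF f]
    by (auto simp: subspace_def linear_0 linear_add linear_scale)
  have "(\<lambda>x. f x - x) ` S = L \<inter> (\<lambda>x. f x - x) ` L"
  proof
    show "(\<lambda>x. f x - x) ` S \<subseteq> L \<inter> (\<lambda>x. f x - x) ` L"
      unfolding S_def using L by (auto intro: subspace_diff)
    show "L \<inter> (\<lambda>x. f x - x) ` L \<subseteq> (\<lambda>x. f x - x) ` S"
    proof
      fix y assume "y \<in> L \<inter> (\<lambda>x. f x - x) ` L"
      then obtain x where x: "x \<in> L" "y = f x - x" "y \<in> L" by auto
      have "(f x - x) + x \<in> L" using x L by (intro subspace_add) auto
      hence "x \<in> S" using x unfolding S_def by simp
      thus "y \<in> (\<lambda>x. f x - x) ` S" using x by blast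
    qed
  qed
  moreover have "S \<inter> {x. f x - x = 0} = L \<inter> fixspace f" unfolding S_def fixspace_def by auto
  moreover have "f ` S = L \<inter> f ` L" unfolding S_def by auto
  moreover have "dim (f ` S) = dim S"
    using dim_image_eq[OF symplectic_linear[OF f]] symplectic_inj[OF f]
    by (metis inj_on_subset subset_UNIV)
  ultimately show ?thesis using dim_image_add_dim_kernel[OF linear_diff_id sS] by simp
qed

lemma star_diff_id:
  assumes b: "b \<in> imgW f"
  shows "star f (f x - x) b = omega x b"
proof -
  define x' where "x' = (SOME x'. f x' - x' = f x - x)"
  have "f x' - x' = f x - x" unfolding x'_def by (rule someI[of _ x]) simp
  have "f (x' - x) = (f x' - x') - (f x - x) + (x' - x)"
    using linear_diff[OF symplectic_linear[OF f], of x' x] by (simp add: algebra_simps)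
  also have "\<dots> = x' - x" using \<open>f x' - x' = f x - x\<close> by simp
  finally have "x' - x \<in> fixspace f" by (simp add: fixspace_def)
  hence "omega b (x' - x) = 0" using b unfolding imgW_eq_symp_compl_fixspace symp_compl_def by blast
  hence "omega x' b = omega x b" by (simp add: omega_antisym[of b "x' - x"] omega_diff_left)
  thus ?thesis unfolding star_def x'_def .
qed

context
  fixes h :: "'g sympvec \<Rightarrow> 'g sympvec"
  assumes h: "linear h" and h_inv: "\<And>v. v \<in> imgW f \<Longrightarrow> f (h v) - h v = v"
begin

lemma bilinear_omega_inverse: "bilinear (\<lambda>a b. omega (h a) b)"
proof -
  have "linear (\<lambda>a. omega a b)" "linear (omega a)" for a b
    using bilinear_omega unfolding bilinear_def by blast+
  thus ?thesis using linear_compose[OF h] unfolding bilinear_def o_def by blast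
qed

lemma star_eq_omega_inverse: "a \<in> imgW f \<Longrightarrow> b \<in> imgW f \<Longrightarrow> star f a b = omega (h a) b"
  using star_diff_id[of b "h a"] h_inv[of a] by simp

lemma omega_inverse_nondegenerate:
  assumes b: "b \<in> imgW f" and orth: "\<And>a. a \<in> imgW f \<Longrightarrow> omega (h a) b = 0"
  shows "b = 0"
proof (rule omega_nondegenerate)
  fix x
  have W: "f x - x \<in> imgW f" unfolding imgW_def by blast
  have "omega x b = star f (f x - x) b" using star_diff_id[OF b] by simp
  also have "\<dots> = omega (h (f x - x)) b" using star_eq_omega_inverse[OF W b] .
  also have "\<dots> = 0" using orth[OF W] .
  finally have "omega x b = 0" .
  thus "omega b x = 0" by (simp add: omega_antisym[of b x])
qed

lemma omega_inverse_sym: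
  assumes L: "lagrangian L" and a: "a \<in> L \<inter> imgW f" and b: "b \<in> L \<inter> imgW f"
  shows "omega (h a) b = omega (h b) a"
proof -
  define x y where "x = h a" and "y = h b"
  have ax: "f x - x = a" and bx: "f y - y = b" using h_inv a b unfolding x_def y_def by auto
  have "omega x (f y - y) - omega y (f x - x) + omega (f x - x) (f y - y) = 0"
    using symplectic_omega[OF f, of x y] omega_antisym[of y x] omega_antisym[of y "f x"]
    by (simp add: omega_diff_left omega_diff_right)
  hence "omega x b - omega y a + omega a b = 0" unfolding ax bx .
  moreover have "omega a b = 0" using a b lagrangian_omega_eq_0[OF L] by simp
  ultimately show ?thesis unfolding x_def y_def by simp
qed

lemma form_radical_omega_inverse:
  assumes L: "lagrangian L"
  shows "form_radical (\<lambda>a b. omega (h a) b) (L \<inter> imgW f) = L \<inter> (\<lambda>x. f x - x) ` L"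
proof -
  have sL: "subspace L" using L by (simp add: lagrangian_iff)
  define S where "S = {x + y |x y. x \<in> L \<and> y \<in> fixspace f}"
  have "subspace S" unfolding S_def by (rule subspace_sums[OF sL subspace_fixspace])
  hence compl: "symp_compl (L \<inter> imgW f) = S"
    unfolding lagrangian_inter_imgW[OF L] S_def[symmetric] by (rule symp_compl_symp_compl)
  \<comment> \<open>\<open>a\<close> is in the radical iff \<open>h a \<in> L + fixspace f\<close>, and \<open>(f - 1)\<close> maps \<open>L + fixspace f\<close> onto \<open>(f - 1) L\<close>.\<close>
  have iff1: "a \<in> L \<inter> (\<lambda>x. f x - x) ` L \<longleftrightarrow> h a \<in> S" if a: "a \<in> L \<inter> imgW f" for a
  proof
    assume "a \<in> L \<inter> (\<lambda>x. f x - x) ` L"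
    then obtain l where l: "l \<in> L" "a = f l - l" by blast
    have "f (h a - l) - (h a - l) = (f (h a) - h a) - (f l - l)"
      using linear_diff[OF symplectic_linear[OF f], of "h a" l] by (simp add: algebra_simps)
    also have "\<dots> = 0" using h_inv[of a] a l(2) by simp
    finally have "h a - l \<in> fixspace f" by (simp add: fixspace_def)
    thus "h a \<in> S" unfolding S_def using l(1)
      by (intro CollectI exI[of _ l] exI[of _ "h a - l"]) simp
  next
    assume "h a \<in> S"
    then obtain l n where ln: "h a = l + n" "l \<in> L" "f n = n" unfolding S_def fixspace_def by blast
    have "a = f (h a) - h a" using h_inv a by simp
    also have "\<dots> = f l - l" unfolding ln(1) using symplectic_linear[OF f] ln(3) by (simp add: linear_add)
    finally show "a \<in> L \<inter> (\<lambda>x. f x - x) ` L" using a ln(2) by blast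
  qed
  have iff2: "h a \<in> S \<longleftrightarrow> (\<forall>b\<in>L \<inter> imgW f. omega (h a) b = 0)" for a
    unfolding compl[symmetric] symp_compl_def by blast
  have "(\<lambda>x. f x - x) ` L \<subseteq> imgW f" unfolding imgW_def by blast
  thus ?thesis unfolding form_radical_def using iff1 iff2 by blast
qed

end

lemma diff_id_right_inverse:
  obtains h where "linear h" "\<And>v. v \<in> imgW f \<Longrightarrow> f (h v) - h v = v"
proof -
  obtain g where "linear g" "\<forall>v\<in>range (\<lambda>x. f x - x). f (g v) - g v = v"
    using linear_exists_right_inverse_on[OF linear_diff_id subspace_UNIV] by auto
  thus ?thesis using that unfolding imgW_def by blast
qed

lemma sgn_det_star_cases: "sgn_det_star f = 1 \<or> sgn_det_star f = -1"
proof -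
  obtain h where h: "linear h" "\<And>v. v \<in> imgW f \<Longrightarrow> f (h v) - h v = v"
    using diff_id_right_inverse by blast
  obtain w0 where "basis_list (imgW f) w0" using basis_list_exists[OF subspace_imgW] .
  hence w: "basis_list (imgW f) (SOME w. basis_list (imgW f) w)" by (rule someI)
  define w where "w = (SOME w. basis_list (imgW f) w)"
  have "ldet (length w) (\<lambda>i j. omega (h (w ! i)) (w ! j)) \<noteq> 0"
    using ldet_gram_neq_0[OF bilinear_omega_inverse[OF h] w] omega_inverse_nondegenerate[OF h]
    unfolding w_def by blast
  moreover have "w ! i \<in> imgW f" if "i < length w" for i
    using basis_list_subset[OF w] nth_mem[OF that] unfolding w_def by blast
  hence "ldet (length w) (\<lambda>i j. star f (w ! i) (w ! j))
      = ldet (length w) (\<lambda>i j. omega (h (w ! i)) (w ! j))"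
    by (intro ldet_cong) (simp add: star_eq_omega_inverse[OF h])
  ultimately show ?thesis unfolding sgn_det_star_def Let_def w_def[symmetric] by auto
qed

lemma signature_star_inertia:
  assumes L: "lagrangian L"
  obtains p q where "signature (star f) (L \<inter> imgW f) = int p - int q"
    "p + q + dim (L \<inter> (\<lambda>x. f x - x) ` L) = dim (L \<inter> imgW f)"
proof -
  obtain h where h: "linear h" "\<And>v. v \<in> imgW f \<Longrightarrow> f (h v) - h v = v"
    using diff_id_right_inverse by blast
  define B where "B = (\<lambda>a b. omega (h a) b)"
  define U where "U = L \<inter> imgW f"
  have "subspace L" using L unfolding lagrangian_iff by blast
  hence U: "subspace U" unfolding U_def using subspace_imgW by (rule subspace_inter)
  have sym: "B x y = B y x" if "x \<in> U" "y \<in> U" for x y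
    using that omega_inverse_sym[OF h L] unfolding B_def U_def by blast
  have "signature (star f) U = signature B U"
    unfolding B_def U_def using star_eq_omega_inverse[OF h] by (intro signature_cong) simp
  also have "\<dots> = int (pos_index B U) - int (pos_index (\<lambda>x y. - B x y) U)"
    by (rule signature_eq_pos_index)
  finally have sig: "signature (star f) U = int (pos_index B U) - int (pos_index (\<lambda>x y. - B x y) U)" .
  have "form_radical B U = L \<inter> (\<lambda>x. f x - x) ` L"
    unfolding B_def U_def by (rule form_radical_omega_inverse[OF h L])
  hence "pos_index B U + pos_index (\<lambda>x y. - B x y) U + dim (L \<inter> (\<lambda>x. f x - x) ` L) = dim U"
    using sylvester_inertia[OF U bilinear_omega_inverse[OF h, folded B_def] sym] by simp
  with sig show ?thesis unfolding U_def by (rule that)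
qed

lemma n_of_parity: "\<exists>t. n_of f = int (CARD('g) - dim (lambda0 \<inter> f ` lambda0)) + 2 * t"
proof -
  have L0: "lagrangian (lambda0 :: 'g sympvec set)" by (rule lagrangian_lambda0)
  have sL0: "subspace (lambda0 :: 'g sympvec set)" using L0 unfolding lagrangian_iff by blast
  obtain p q where sig: "signature (star f) (lambda0 \<inter> imgW f) = int p - int q"
    and inertia: "p + q + dim (lambda0 \<inter> (\<lambda>x. f x - x) ` lambda0) = dim (lambda0 \<inter> imgW f)"
    by (rule signature_star_inertia[OF L0])
  define d where "d = (1 - sgn_det_star f) div 2"
  have d: "d * 2 = 1 - sgn_det_star f" unfolding d_def using sgn_det_star_cases by auto
  have "dim (lambda0 \<inter> f ` lambda0) \<le> CARD('g)"
    using dim_subset[of "lambda0 \<inter> f ` lambda0" lambda0] dim_lagrangian[OF L0] by simp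
  hence "int (CARD('g) - dim (lambda0 \<inter> f ` lambda0))
      = int CARD('g) - int (dim (lambda0 \<inter> f ` lambda0))" by simp
  moreover note arg_cong[OF inertia, of int] arg_cong[OF dim_imgW_add_dim_fixspace, of int]
    arg_cong[OF dim_lagrangian_inter_imgW[OF L0], of int]
    arg_cong[OF dim_inter_image_diff_id[OF sL0], of int]
  \<comment> \<open>Only parities matter: \<open>n(f) = (g - k) + 2 (dim (\<lambda>\<^sub>0 \<inter> N) - q - g) + (1 - sgn det \<star>\<^sub>f)\<close>.\<close>
  ultimately have "n_of f = int (CARD('g) - dim (lambda0 \<inter> f ` lambda0))
      + 2 * int (dim (lambda0 \<inter> fixspace f)) - 2 * int q - 2 * int CARD('g) + d * 2"
    using sig d unfolding n_of_def by (simp only: of_nat_add of_nat_mult of_nat_numeral; linarith)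
  thus ?thesis by (intro exI[of _ "int (dim (lambda0 \<inter> fixspace f)) - int q - int CARD('g) + d"])
      (simp add: algebra_simps)
qed

end

lemma power_int_minus_one_add_even:
  "(-1 :: 'a :: field) powi (int m + 2 * t) = (-1) ^ m"
  by (simp add: power_int_add power_int_mult)

theorem proposition4p1:
  fixes f :: "'g::finite sympvec \<Rightarrow> 'g sympvec"
  assumes "symplectic f"
  shows "(s_of f) ^ 2 = (-1::complex) powi (n_of f)"
proof -
  obtain t where "n_of f = int (CARD('g) - dim (lambda0 \<inter> f ` lambda0)) + 2 * t"
    using n_of_parity[OF assms] by blast
  thus ?thesis using s_of_square[OF assms] by (simp add: power_int_minus_one_add_even)
qed

end
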